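(* Let $G$ be a finite supersolvable group and $A$ a conjugacy class of $G$. Then $$\operatorname{dl}(G/\mathbf{C}_G(A))\le 2\,\eta(AA^{-1})-1.$$
   Context: For a nonempty subset $X\subseteq G$ that is $G$-invariant (i.e. $g^{-1}Xg=X$ for all $g\in G$), $\eta(X)$ denotes the number of distinct conjugacy classes of $G$ whose union is $X$. For conjugacy classes $A,B$, $AB=\{ab\mid a\in A,b\in B\}$ and $A^{-1}=\{a^{-1}\mid a\in A\}$, so $AA^{-1}=\{ab^{-1}\mid a,b\in A\}$, which is $G$-invariant. $\mathbf{C}_G(A)=\{g\in G\mid g^{-1}ag=a\text{ for all }a\in A\}$. $\operatorname{dl}$ denotes derived length. *)

theory Defs
  imports "HOL-Algebra.Algebra"
begin

definition cyclic_grp :: "('a, 'b) monoid_scheme \<Rightarrow> bool" where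
  "cyclic_grp H \<longleftrightarrow> (\<exists>a \<in> carrier H. carrier H = generate H {a})"

definition supersolvable :: "('a, 'b) monoid_scheme \<Rightarrow> bool" where
  "supersolvable G \<longleftrightarrow>
     (\<exists>(r::nat) (N::nat \<Rightarrow> 'a set).
        N 0 = {\<one>\<^bsub>G\<^esub>} \<and> N r = carrier G \<and>
        (\<forall>i\<le>r. N i \<lhd> G) \<and>
        (\<forall>i<r. N i \<subseteq> N (Suc i) \<and>
               cyclic_grp ((G\<lparr>carrier := N (Suc i)\<rparr>) Mod (N i))))"

definition conj_class :: "('a, 'b) monoid_scheme \<Rightarrow> 'a \<Rightarrow> 'a set" where
  "conj_class G a = {inv\<^bsub>G\<^esub> g \<otimes>\<^bsub>G\<^esub> a \<otimes>\<^bsub>G\<^esub> g | g. g \<in> carrier G}"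

definition conj_classes :: "('a, 'b) monoid_scheme \<Rightarrow> 'a set set" where
  "conj_classes G = {conj_class G a | a. a \<in> carrier G}"

definition num_classes :: "('a, 'b) monoid_scheme \<Rightarrow> 'a set \<Rightarrow> nat" where
  "num_classes G S = card {C \<in> conj_classes G. C \<subseteq> S}"

definition set_mult_inv :: "('a, 'b) monoid_scheme \<Rightarrow> 'a set \<Rightarrow> 'a set" where
  "set_mult_inv G A = {a \<otimes>\<^bsub>G\<^esub> inv\<^bsub>G\<^esub> b | a b. a \<in> A \<and> b \<in> A}"

definition centralizer_set :: "('a, 'b) monoid_scheme \<Rightarrow> 'a set \<Rightarrow> 'a set" where
  "centralizer_set G A = {g \<in> carrier G. \<forall>a \<in> A. inv\<^bsub>G\<^esub> g \<otimes>\<^bsub>G\<^esub> a \<otimes>\<^bsub>G\<^esub> g = a}"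

definition derived_length :: "('a, 'b) monoid_scheme \<Rightarrow> nat" where
  "derived_length H = (LEAST n. (derived H ^^ n) (carrier H) = {\<one>\<^bsub>H\<^esub>})"

end

(* Write D(M) for the elements of G that centralize the image of A in G/M, and e(M) for the
   number of conjugacy classes of G/M contained in the image of AA^-1.  For a normal M < G,
   supersolvability provides a normal N > M with N/M cyclic, and e(N) <= e(M).  If D(N) is not
   contained in D(M), some x^g x^-1 with x in A and g in D(N) lies in AA^-1 and in N but not in M;
   its class fuses with the trivial class modulo N, so e(N) < e(M), and in that case
   D(N)'' <= D(M) because N/M is cyclic.  Downward induction on M gives G^(2e(M)-1) <= D(M); for
   M = 1 this is the theorem, since D(1) = C_G(A) and e(1) = eta(AA^-1). *)

theory Submission
  imports Defs
begin

section \<open>Conjugation\<close>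

definition conjugate :: "('a, 'b) monoid_scheme \<Rightarrow> 'a \<Rightarrow> 'a \<Rightarrow> 'a" where
  "conjugate G g x = inv\<^bsub>G\<^esub> g \<otimes>\<^bsub>G\<^esub> x \<otimes>\<^bsub>G\<^esub> g"

context group begin

lemma conjugate_closed [simp]: "g \<in> carrier G \<Longrightarrow> x \<in> carrier G \<Longrightarrow> conjugate G g x \<in> carrier G"
  by (simp add: conjugate_def)

lemma conjugate_one [simp]: "x \<in> carrier G \<Longrightarrow> conjugate G \<one> x = x"
  by (simp add: conjugate_def)

lemma conjugate_mult:
  "g \<in> carrier G \<Longrightarrow> h \<in> carrier G \<Longrightarrow> x \<in> carrier G \<Longrightarrow>
   conjugate G (g \<otimes> h) x = conjugate G h (conjugate G g x)"
  by (simp add: conjugate_def inv_mult_group m_assoc)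

lemma conjugate_inv_cancel:
  "g \<in> carrier G \<Longrightarrow> x \<in> carrier G \<Longrightarrow> conjugate G (inv g) (conjugate G g x) = x"
  by (simp add: conjugate_mult[symmetric])

lemma conjugate_inv_eq_iff:
  assumes "g \<in> carrier G" "x \<in> carrier G" "y \<in> carrier G"
  shows "conjugate G (inv g) x = y \<longleftrightarrow> x = conjugate G g y"
  using assms conjugate_inv_cancel[of g y] conjugate_inv_cancel[of "inv g" x] by auto

lemma mult_inv_cancel_left: "g \<in> carrier G \<Longrightarrow> x \<in> carrier G \<Longrightarrow> g \<otimes> (inv g \<otimes> x) = x"
  by (simp add: m_assoc[symmetric])

lemma group_hom_conjugate: "g \<in> carrier G \<Longrightarrow> group_hom G G (conjugate G g)"
  by unfold_locales (auto intro!: homI simp: conjugate_def m_assoc mult_inv_cancel_left)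

lemma conjugate_hom_mult:
  "g \<in> carrier G \<Longrightarrow> x \<in> carrier G \<Longrightarrow> y \<in> carrier G \<Longrightarrow>
   conjugate G g (x \<otimes> y) = conjugate G g x \<otimes> conjugate G g y"
  using group_hom.hom_mult[OF group_hom_conjugate] by blast

lemma conjugate_inv:
  "g \<in> carrier G \<Longrightarrow> x \<in> carrier G \<Longrightarrow> conjugate G g (inv x) = inv (conjugate G g x)"
  using group_hom.hom_inv[OF group_hom_conjugate] by blast

lemma conjugate_int_pow:
  "g \<in> carrier G \<Longrightarrow> x \<in> carrier G \<Longrightarrow> conjugate G g (x [^] (k::int)) = conjugate G g x [^] k"
  using group_hom.hom_int_pow[OF group_hom_conjugate] by blast

lemma conjugate_commutator_eq_iff:
  assumes "u \<in> carrier G" "v \<in> carrier G" "y \<in> carrier G"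
  shows "conjugate G (u \<otimes> v \<otimes> inv u \<otimes> inv v) y = y \<longleftrightarrow>
         conjugate G v (conjugate G u y) = conjugate G u (conjugate G v y)"
proof -
  have "u \<otimes> v \<otimes> inv u \<otimes> inv v = (u \<otimes> v) \<otimes> inv (v \<otimes> u)"
    using assms by (simp add: inv_mult_group m_assoc)
  then have "conjugate G (u \<otimes> v \<otimes> inv u \<otimes> inv v) y
             = conjugate G (inv (v \<otimes> u)) (conjugate G v (conjugate G u y))"
    using assms by (simp add: conjugate_mult)
  moreover have "conjugate G u (conjugate G v y) = conjugate G (v \<otimes> u) y"
    using assms by (simp add: conjugate_mult)
  ultimately show ?thesis
    using assms conjugate_inv_eq_iff[of "v \<otimes> u" "conjugate G v (conjugate G u y)" y] by auto
qed

lemma centralizer_set_conjugate: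
  "centralizer_set G S = {g \<in> carrier G. \<forall>s \<in> S. conjugate G g s = s}"
  by (simp add: centralizer_set_def conjugate_def)

lemma subgroup_centralizer_set:
  assumes "S \<subseteq> carrier G"
  shows "subgroup (centralizer_set G S) G"
proof (rule subgroupI)
  show "centralizer_set G S \<noteq> {}"
    using assms by (auto simp: centralizer_set_conjugate subset_iff intro!: exI[of _ \<one>])
  fix g h assume "g \<in> centralizer_set G S" "h \<in> centralizer_set G S"
  then have g: "g \<in> carrier G" "\<And>s. s \<in> S \<Longrightarrow> conjugate G g s = s"
    and h: "h \<in> carrier G" "\<And>s. s \<in> S \<Longrightarrow> conjugate G h s = s"
    by (auto simp: centralizer_set_conjugate)
  have "conjugate G (inv g) s = s" if "s \<in> S" for s
    using conjugate_inv_cancel[of g s] g that assms by auto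
  then show "inv g \<in> centralizer_set G S"
    using g by (simp add: centralizer_set_conjugate)
  have "conjugate G (g \<otimes> h) s = s" if "s \<in> S" for s
    using conjugate_mult[of g h s] g h that assms by auto
  then show "g \<otimes> h \<in> centralizer_set G S"
    using g h by (simp add: centralizer_set_conjugate)
qed (auto simp: centralizer_set_def)

lemma conjugate_commutator_of_powers:
  assumes "u \<in> carrier G" "v \<in> carrier G" "z \<in> carrier G"
    and "conjugate G u z = z [^] (a::int)" "conjugate G v z = z [^] (b::int)"
  shows "conjugate G (u \<otimes> v \<otimes> inv u \<otimes> inv v) z = z"
proof -
  have "conjugate G v (conjugate G u z) = z [^] (b * a)"
    "conjugate G u (conjugate G v z) = z [^] (a * b)"
    using assms by (simp_all add: conjugate_int_pow int_pow_pow)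
  then show ?thesis
    using assms(1-3) by (simp add: conjugate_commutator_eq_iff mult.commute)
qed

lemma conjugate_commutator_of_translations:
  assumes "g \<in> carrier G" "h \<in> carrier G" "z \<in> carrier G" "x \<in> carrier G"
    and "conjugate G g z = z" "conjugate G h z = z"
    and "conjugate G g x = z [^] (i::int) \<otimes> x" "conjugate G h x = z [^] (j::int) \<otimes> x"
  shows "conjugate G (g \<otimes> h \<otimes> inv g \<otimes> inv h) x = x"
proof -
  have "conjugate G h (conjugate G g x) = z [^] (i + j) \<otimes> x"
    "conjugate G g (conjugate G h x) = z [^] (j + i) \<otimes> x"
    using assms by (simp_all add: conjugate_hom_mult conjugate_int_pow int_pow_mult m_assoc)
  then show ?thesis
    using assms(1,2,4) by (simp add: conjugate_commutator_eq_iff add.commute)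
qed

(* Conjugation by K induces automorphisms of the cyclic group <z>, and these commute, so K'
   centralizes z; the elements of K' \<inter> C(z) move each x \<in> S by commuting translations from <z>,
   so K'' centralizes S. *)

lemma derived_derived_subset_centralizer_set:
  assumes K: "subgroup K G" and S: "S \<subseteq> carrier G" and z: "z \<in> carrier G"
    and power: "\<And>g. g \<in> K \<Longrightarrow> \<exists>a::int. conjugate G g z = z [^] a"
    and shift: "\<And>g x. g \<in> K \<Longrightarrow> x \<in> S \<Longrightarrow> \<exists>i::int. conjugate G g x = z [^] i \<otimes> x"
  shows "derived G (derived G K) \<subseteq> centralizer_set G S"
proof -
  define T where "T = centralizer_set G {z}"
  have T: "subgroup T G"
    unfolding T_def using z by (intro subgroup_centralizer_set) simp
  have K_carrier: "g \<in> carrier G" if "g \<in> K" for g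
    using subgroup.mem_carrier[OF K that] .
  have "u \<otimes> v \<otimes> inv u \<otimes> inv v \<in> T" if u: "u \<in> K" and v: "v \<in> K" for u v
  proof -
    obtain a b :: int where "conjugate G u z = z [^] a" "conjugate G v z = z [^] b"
      using power u v by blast
    then show ?thesis
      using conjugate_commutator_of_powers[OF K_carrier[OF u] K_carrier[OF v] z] K_carrier u v
      by (simp add: T_def centralizer_set_conjugate)
  qed
  then have "derived G K \<subseteq> T"
    unfolding derived_def by (intro generate_subgroup_incl[OF _ T]) blast
  then have derived_K: "derived G K \<subseteq> T \<inter> K"
    using derived_incl[OF subset_refl K] by blast
  have "g \<otimes> h \<otimes> inv g \<otimes> inv h \<in> centralizer_set G S"
    if g: "g \<in> T \<inter> K" and h: "h \<in> T \<inter> K" for g h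
  proof -
    have gh: "g \<in> carrier G" "h \<in> carrier G" using g h K_carrier by auto
    have fix_z: "conjugate G g z = z" "conjugate G h z = z"
      using g h by (auto simp: T_def centralizer_set_conjugate)
    have "conjugate G (g \<otimes> h \<otimes> inv g \<otimes> inv h) x = x" if x: "x \<in> S" for x
    proof -
      obtain i j :: int where "conjugate G g x = z [^] i \<otimes> x" "conjugate G h x = z [^] j \<otimes> x"
        using shift g h x by blast
      then show ?thesis
        using conjugate_commutator_of_translations[OF gh z _ fix_z] x S by blast
    qed
    then show ?thesis
      using gh by (simp add: centralizer_set_conjugate)
  qed
  then have "derived G (T \<inter> K) \<subseteq> centralizer_set G S"
    unfolding derived_def by (intro generate_subgroup_incl[OF _ subgroup_centralizer_set[OF S]]) blast
  with mono_derived[OF derived_K] show ?thesis by blast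
qed

end

section \<open>Centralizers modulo a normal subgroup\<close>

lemma (in group_hom) subgroup_vimage:
  assumes "subgroup K H"
  shows "subgroup (h -` K \<inter> carrier G) G"
proof (rule G.subgroupI)
  have "\<one> \<in> h -` K \<inter> carrier G"
    using subgroup.one_closed[OF assms] by simp
  then show "h -` K \<inter> carrier G \<noteq> {}" by blast
  fix g g' assume "g \<in> h -` K \<inter> carrier G" "g' \<in> h -` K \<inter> carrier G"
  then show "inv g \<in> h -` K \<inter> carrier G" "g \<otimes> g' \<in> h -` K \<inter> carrier G"
    using subgroup.m_inv_closed[OF assms] subgroup.m_closed[OF assms] by auto
qed auto

lemma (in group_hom) hom_conjugate:
  "g \<in> carrier G \<Longrightarrow> x \<in> carrier G \<Longrightarrow> h (conjugate G g x) = conjugate H (h g) (h x)"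
  by (simp add: conjugate_def)

lemma (in normal) group_hom_rcos: "group_hom G (G Mod H) ((#>) H)"
  by (simp add: group_hom_def group_hom_axioms_def is_group factorgroup_is_group r_coset_hom_Mod)

lemma (in group) rcos_eq_iff_mult_inv_mem:
  assumes "subgroup H G" "x \<in> carrier G" "y \<in> carrier G"
  shows "H #> x = H #> y \<longleftrightarrow> x \<otimes> inv y \<in> H"
  using subgroup.rcos_module[OF assms(1) is_group assms(3,2)] rcos_self[OF _ assms(1)]
    repr_independence[OF _ _ assms(1)] assms(2,3) by metis

definition centralizer_mod :: "('a, 'b) monoid_scheme \<Rightarrow> 'a set \<Rightarrow> 'a set \<Rightarrow> 'a set" where
  "centralizer_mod G M A =
     {g \<in> carrier G. \<forall>x \<in> A. conjugate G g x \<otimes>\<^bsub>G\<^esub> inv\<^bsub>G\<^esub> x \<in> M}"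

context group begin

lemma centralizer_mod_one:
  assumes "A \<subseteq> carrier G"
  shows "centralizer_mod G {\<one>} A = centralizer_set G A"
proof -
  have "conjugate G g x \<otimes> inv x = \<one> \<longleftrightarrow> conjugate G g x = x"
    if "g \<in> carrier G" "x \<in> A" for g x
    using that assms inv_solve_right'[of \<one> "conjugate G g x" x] by auto
  then show ?thesis
    by (auto simp: centralizer_mod_def centralizer_set_conjugate)
qed

lemma centralizer_mod_carrier:
  "A \<subseteq> carrier G \<Longrightarrow> centralizer_mod G (carrier G) A = carrier G"
  by (auto simp: centralizer_mod_def)

end

context normal begin

lemma mem_centralizer_mod_iff:
  assumes "A \<subseteq> carrier G" "g \<in> carrier G"
  shows "g \<in> centralizer_mod G H A \<longleftrightarrow>
         H #> g \<in> centralizer_set (G Mod H) ((#>) H ` A)"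
proof -
  interpret Q: group_hom G "G Mod H" "(#>) H" by (rule group_hom_rcos)
  have "conjugate G g x \<otimes> inv x \<in> H \<longleftrightarrow>
        conjugate (G Mod H) (H #> g) (H #> x) = H #> x" if "x \<in> A" for x
    using that assms rcos_eq_iff_mult_inv_mem[OF subgroup_axioms, of "conjugate G g x" x]
    by (auto simp: Q.hom_conjugate)
  then show ?thesis
    using assms by (auto simp: centralizer_mod_def Q.H.centralizer_set_conjugate)
qed

lemma subgroup_centralizer_mod:
  assumes "A \<subseteq> carrier G"
  shows "subgroup (centralizer_mod G H A) G"
proof -
  interpret Q: group_hom G "G Mod H" "(#>) H" by (rule group_hom_rcos)
  have "centralizer_mod G H A = (#>) H -` centralizer_set (G Mod H) ((#>) H ` A) \<inter> carrier G"
    using mem_centralizer_mod_iff[OF assms] by (auto simp: centralizer_mod_def)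
  also have "subgroup \<dots> G"
    using assms by (intro Q.subgroup_vimage Q.H.subgroup_centralizer_set) auto
  finally show ?thesis .
qed

end

section \<open>Cyclic normal factors\<close>

(* The image of N in G/M is cyclic, generated by zM. *)
definition cyclic_mod :: "('a, 'b) monoid_scheme \<Rightarrow> 'a set \<Rightarrow> 'a set \<Rightarrow> bool" where
  "cyclic_mod G M N \<longleftrightarrow> (\<exists>z \<in> N. \<forall>n \<in> N. \<exists>k::int. n \<in> M #>\<^bsub>G\<^esub> z [^]\<^bsub>G\<^esub> k)"

lemma r_coset_carrier_update: "r_coset (G\<lparr>carrier := H\<rparr>) = r_coset G"
  by (intro ext) (simp add: r_coset_def)

context group begin

lemma cyclic_mod_of_cyclic_quotient:
  assumes H: "subgroup H G" and K: "K \<lhd> G\<lparr>carrier := H\<rparr>"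
    and cyclic: "cyclic_grp (G\<lparr>carrier := H\<rparr> Mod K)"
  shows "cyclic_mod G K H"
proof -
  interpret K: normal K "G\<lparr>carrier := H\<rparr>" by (rule K)
  interpret Q: group "G\<lparr>carrier := H\<rparr> Mod K" by (rule K.factorgroup_is_group)
  obtain a where a: "a \<in> carrier (G\<lparr>carrier := H\<rparr> Mod K)"
    and generated: "carrier (G\<lparr>carrier := H\<rparr> Mod K) = generate (G\<lparr>carrier := H\<rparr> Mod K) {a}"
    using cyclic unfolding cyclic_grp_def by blast
  obtain c where c: "c \<in> H" and a_eq: "a = K #> c"
    using a unfolding carrier_FactGroup r_coset_carrier_update by auto
  have "\<exists>k::int. n \<in> K #> c [^] k" if n: "n \<in> H" for n
  proof -
    have "K #> n \<in> carrier (G\<lparr>carrier := H\<rparr> Mod K)"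
      using n unfolding carrier_FactGroup r_coset_carrier_update by auto
    then obtain k :: int where "K #> n = a [^]\<^bsub>G\<lparr>carrier := H\<rparr> Mod K\<^esub> k"
      using generated Q.generate_pow[OF a] by auto
    also have "\<dots> = K #> c [^] k"
      using K.FactGroup_int_pow[of c k] c int_pow_consistent[OF H c]
      unfolding a_eq r_coset_carrier_update by simp
    finally show ?thesis
      using K.rcos_self[OF _ K.subgroup_axioms, of n] n unfolding r_coset_carrier_update by auto
  qed
  with c show ?thesis unfolding cyclic_mod_def by blast
qed

lemma cyclic_mod_mono:
  assumes "K \<subseteq> M" and "cyclic_mod G K H"
  shows "cyclic_mod G M H"
proof -
  have "K #> y \<subseteq> M #> y" for y
    using assms(1) unfolding r_coset_def by blast
  then show ?thesis
    using assms(2) unfolding cyclic_mod_def by (meson subsetD)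
qed

lemma cyclic_mod_set_mult:
  assumes M: "M \<lhd> G" and H: "subgroup H G" and cyclic: "cyclic_mod G M H"
  shows "cyclic_mod G M (H <#> M)"
proof -
  interpret M: normal M G by (rule M)
  obtain z where z: "z \<in> H" and generates: "\<And>n. n \<in> H \<Longrightarrow> \<exists>k::int. n \<in> M #> z [^] k"
    using cyclic unfolding cyclic_mod_def by blast
  have zc: "z \<in> carrier G" using z subgroup.mem_carrier[OF H] by blast
  have "z \<in> H <#> M"
    using z zc M.one_closed r_one[OF zc, symmetric] unfolding set_mult_def by blast
  moreover have "\<exists>k::int. y \<in> M #> z [^] k" if "y \<in> H <#> M" for y
  proof -
    obtain n m where n: "n \<in> H" and m: "m \<in> M" and y: "y = n \<otimes> m"
      using \<open>y \<in> H <#> M\<close> unfolding set_mult_def by blast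
    obtain k :: int and m' where m': "m' \<in> M" and n_eq: "n = m' \<otimes> z [^] k"
      using generates[OF n] unfolding r_coset_def by blast
    define w where "w = z [^] k"
    have wc: "w \<in> carrier G" unfolding w_def using zc by simp
    have mc: "m \<in> carrier G" "m' \<in> carrier G" using m m' M.subset by auto
    have "y = (m' \<otimes> (w \<otimes> m \<otimes> inv w)) \<otimes> w"
      using mc wc by (simp add: y n_eq w_def[symmetric] m_assoc)
    moreover have "m' \<otimes> (w \<otimes> m \<otimes> inv w) \<in> M"
      using M.inv_op_closed2[OF wc m] m' by simp
    ultimately show ?thesis
      unfolding r_coset_def w_def by blast
  qed
  ultimately show ?thesis unfolding cyclic_mod_def by blast
qed

lemma supersolvable_cyclic_mod_not_subset:
  assumes supersolvable: "supersolvable G" and M: "M \<lhd> G" and proper: "M \<noteq> carrier G"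
  shows "\<exists>H. H \<lhd> G \<and> \<not> H \<subseteq> M \<and> cyclic_mod G M H"
proof -
  obtain r :: nat and Nc :: "nat \<Rightarrow> 'a set" where
    Nc0: "Nc 0 = {\<one>}" and Ncr: "Nc r = carrier G" and chain_normal: "\<forall>i\<le>r. Nc i \<lhd> G"
    and steps: "\<forall>i<r. Nc i \<subseteq> Nc (Suc i) \<and> cyclic_grp (G\<lparr>carrier := Nc (Suc i)\<rparr> Mod Nc i)"
    using supersolvable unfolding supersolvable_def by blast
  have sub: "subgroup M G" using M normal_imp_subgroup by blast
  have "\<not> Nc r \<subseteq> M" using Ncr proper subgroup.subset[OF sub] by blast
  define i where "i = (LEAST i. \<not> Nc i \<subseteq> M)"
  have Nci: "\<not> Nc i \<subseteq> M"
    unfolding i_def by (rule LeastI[of _ r]) fact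
  have ir: "i \<le> r"
    unfolding i_def by (rule Least_le) fact
  have "i \<noteq> 0" using Nci Nc0 subgroup.one_closed[OF sub] by auto
  then obtain j where ij: "i = Suc j" using not0_implies_Suc by blast
  have Ncj: "Nc j \<subseteq> M" using not_less_Least[of j "\<lambda>i. \<not> Nc i \<subseteq> M"] ij unfolding i_def by simp
  have jr: "j < r" using ij ir by simp
  have Nci_normal: "Nc i \<lhd> G" and Ncj_normal: "Nc j \<lhd> G"
    using chain_normal ir jr by auto
  have Nci_sub: "subgroup (Nc i) G" using normal_imp_subgroup[OF Nci_normal] .
  have "Nc j \<lhd> G\<lparr>carrier := Nc i\<rparr>"
    using normal_restrict_supergroup[OF Nci_sub Ncj_normal] steps jr ij by simp
  moreover have "cyclic_grp (G\<lparr>carrier := Nc i\<rparr> Mod Nc j)"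
    using steps jr ij by simp
  ultimately have "cyclic_mod G M (Nc i)"
    using cyclic_mod_mono[OF Ncj cyclic_mod_of_cyclic_quotient[OF Nci_sub]] by blast
  with Nci_normal Nci show ?thesis by blast
qed

lemma supersolvable_cyclic_mod_step:
  assumes supersolvable: "supersolvable G" and M: "M \<lhd> G" and proper: "M \<noteq> carrier G"
  shows "\<exists>N. N \<lhd> G \<and> M \<subset> N \<and> cyclic_mod G M N"
proof -
  obtain H where H: "H \<lhd> G" and not_subset: "\<not> H \<subseteq> M" and cyclic: "cyclic_mod G M H"
    using supersolvable_cyclic_mod_not_subset[OF assms] by blast
  have sub: "subgroup M G" "subgroup H G" using M H normal_imp_subgroup by blast+
  have "cyclic_mod G M (H <#> M)"
    by (rule cyclic_mod_set_mult[OF M sub(2) cyclic])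
  moreover have "H <#> M \<lhd> G"
    using normal_subgroup_set_mult_closed[OF H M] .
  moreover have "M \<subseteq> H <#> M" "H \<subseteq> H <#> M"
    using subgroup.one_closed[OF sub(1)] subgroup.one_closed[OF sub(2)]
      subgroup.mem_carrier[OF sub(1)] subgroup.mem_carrier[OF sub(2)]
    unfolding set_mult_def by (force, force)
  ultimately show ?thesis using not_subset by blast
qed

end

lemma (in normal) rcos_int_pow_of_cyclic_mod:
  assumes z: "z \<in> carrier G" and generates: "\<forall>n \<in> N. \<exists>k::int. n \<in> H #> z [^] k"
    and n: "n \<in> N"
  shows "\<exists>k::int. H #> n = (H #> z) [^]\<^bsub>G Mod H\<^esub> k"
proof -
  obtain k :: int where "n \<in> H #> z [^] k" using generates n by blast
  then have "H #> n = H #> z [^] k"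
    using repr_independence[OF _ _ subgroup_axioms] z by (metis int_pow_closed)
  then show ?thesis using FactGroup_int_pow[OF z] by metis
qed

lemma (in group) rcos_derived_derived_centralizer_mod_subset:
  assumes M: "M \<lhd> G" and N: "N \<lhd> G" and A: "A \<subseteq> carrier G" and cyclic: "cyclic_mod G M N"
  shows "(#>) M ` derived G (derived G (centralizer_mod G N A))
           \<subseteq> centralizer_set (G Mod M) ((#>) M ` A)"
proof -
  interpret M: normal M G by (rule M)
  interpret N: normal N G by (rule N)
  interpret Q: group_hom G "G Mod M" "(#>) M" by (rule M.group_hom_rcos)
  obtain z where z: "z \<in> N" and generates: "\<forall>n \<in> N. \<exists>k::int. n \<in> M #> z [^] k"
    using cyclic unfolding cyclic_mod_def by blast
  have zc: "z \<in> carrier G" using z N.subset by blast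
  note N_powers = M.rcos_int_pow_of_cyclic_mod[OF zc generates]
  let ?D = "centralizer_mod G N A"
  have D: "subgroup ?D G" by (rule N.subgroup_centralizer_mod[OF A])
  have D_carrier: "?D \<subseteq> carrier G" by (auto simp: centralizer_mod_def)
  have "derived (G Mod M) (derived (G Mod M) ((#>) M ` ?D))
        \<subseteq> centralizer_set (G Mod M) ((#>) M ` A)"
  proof (rule Q.H.derived_derived_subset_centralizer_set)
    show "subgroup ((#>) M ` ?D) (G Mod M)" by (rule Q.subgroup_img_is_subgroup[OF D])
    show "(#>) M ` A \<subseteq> carrier (G Mod M)" using A by auto
    show "M #> z \<in> carrier (G Mod M)" using zc by simp
  next
    fix h assume "h \<in> (#>) M ` ?D"
    then obtain g where g: "g \<in> ?D" and h: "h = M #> g" by blast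
    have gc: "g \<in> carrier G" using g D_carrier by blast
    have "conjugate G g z \<in> N"
      unfolding conjugate_def using N.inv_op_closed1[OF gc z] .
    then show "\<exists>a::int. conjugate (G Mod M) h (M #> z) = (M #> z) [^]\<^bsub>G Mod M\<^esub> a"
      using N_powers h gc zc by (simp add: Q.hom_conjugate[symmetric])
    fix y assume "y \<in> (#>) M ` A"
    then obtain x where x: "x \<in> A" and y: "y = M #> x" by blast
    have xc: "x \<in> carrier G" using x A by blast
    have "conjugate G g x \<otimes> inv x \<in> N"
      using g x by (simp add: centralizer_mod_def)
    then obtain i :: int where i: "M #> (conjugate G g x \<otimes> inv x) = (M #> z) [^]\<^bsub>G Mod M\<^esub> i"
      using N_powers by blast
    have "conjugate (G Mod M) h y = M #> (conjugate G g x \<otimes> inv x \<otimes> x)"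
      using gc xc by (simp add: h y Q.hom_conjugate m_assoc)
    also have "\<dots> = (M #> z) [^]\<^bsub>G Mod M\<^esub> i \<otimes>\<^bsub>G Mod M\<^esub> y"
      using gc xc by (simp add: y i[symmetric])
    finally show "\<exists>i::int. conjugate (G Mod M) h y = (M #> z) [^]\<^bsub>G Mod M\<^esub> i \<otimes>\<^bsub>G Mod M\<^esub> y"
      by blast
  qed
  then show ?thesis
    using D_carrier derived_in_carrier[OF D_carrier] by (simp add: Q.derived_img)
qed

lemma (in group) derived_derived_centralizer_mod_subset:
  assumes M: "M \<lhd> G" and N: "N \<lhd> G" and A: "A \<subseteq> carrier G" and cyclic: "cyclic_mod G M N"
  shows "derived G (derived G (centralizer_mod G N A)) \<subseteq> centralizer_mod G M A"
  using rcos_derived_derived_centralizer_mod_subset[OF assms] normal.mem_centralizer_mod_iff[OF M A]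
    derived_in_carrier[OF derived_in_carrier, of "centralizer_mod G N A"]
  by (auto simp: centralizer_mod_def)

section \<open>Counting conjugacy classes modulo a normal subgroup\<close>

(* M <#> conj_class G x is the union of the cosets in the G/M-class of xM, so classes_mod G M Y
   corresponds to the set of conjugacy classes of G/M that meet the image of Y. *)
definition classes_mod :: "('a, 'b) monoid_scheme \<Rightarrow> 'a set \<Rightarrow> 'a set \<Rightarrow> 'a set set" where
  "classes_mod G M Y = (\<lambda>x. M <#>\<^bsub>G\<^esub> conj_class G x) ` Y"

context group begin

lemma conj_class_conjugate: "conj_class G x = {conjugate G g x | g. g \<in> carrier G}"
  by (simp add: conj_class_def conjugate_def)

lemma conj_class_carrier: "x \<in> carrier G \<Longrightarrow> conj_class G x \<subseteq> carrier G"
  by (auto simp: conj_class_conjugate)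

lemma conj_class_self: "x \<in> carrier G \<Longrightarrow> x \<in> conj_class G x"
  using conjugate_one[of x, symmetric] one_closed unfolding conj_class_conjugate by blast

lemma normal_set_mult_conj_class:
  assumes N: "N \<lhd> G" and x: "x \<in> N"
  shows "N <#> conj_class G x = N"
proof -
  interpret N: normal N G by (rule N)
  have xc: "x \<in> carrier G" using x N.subset by blast
  have "conj_class G x \<subseteq> N"
    using N.inv_op_closed1 x by (auto simp: conj_class_def)
  then have "N <#> conj_class G x \<subseteq> N"
    by (auto simp: set_mult_def)
  moreover have "n \<in> N <#> conj_class G x" if n: "n \<in> N" for n
  proof -
    have "n = (n \<otimes> inv x) \<otimes> x"
      using n xc N.subset by (auto simp: m_assoc)
    then show ?thesis
      using n x conj_class_self[OF xc] unfolding set_mult_def by blast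
  qed
  ultimately show ?thesis by blast
qed

lemma set_mult_subgroup_absorb:
  assumes M: "subgroup M G" and N: "subgroup N G" and MN: "M \<subseteq> N" and S: "S \<subseteq> carrier G"
  shows "N <#> (M <#> S) = N <#> S"
  using set_mult_assoc[OF subgroup.subset[OF N] subgroup.subset[OF M] S]
    set_mult_subgroup_idem[OF N subgroup_incl[OF M N MN]] by simp

lemma classes_mod_image:
  assumes M: "subgroup M G" and N: "subgroup N G" and MN: "M \<subseteq> N" and Y: "Y \<subseteq> carrier G"
  shows "(\<lambda>S. N <#> S) ` classes_mod G M Y = classes_mod G N Y"
  unfolding classes_mod_def image_image
  using set_mult_subgroup_absorb[OF M N MN conj_class_carrier] Y by (auto intro: image_cong)

lemma card_classes_mod_mono:
  assumes "subgroup M G" "subgroup N G" "M \<subseteq> N" "Y \<subseteq> carrier G" "finite Y"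
  shows "card (classes_mod G N Y) \<le> card (classes_mod G M Y)"
  using classes_mod_image[OF assms(1-4)] card_image_le[of "classes_mod G M Y"] assms(5)
  by (metis classes_mod_def finite_imageI)

lemma card_classes_mod_strict_mono:
  assumes M: "M \<lhd> G" and N: "N \<lhd> G" and MN: "M \<subseteq> N" and Y: "Y \<subseteq> carrier G" "finite Y"
    and one: "\<one> \<in> Y" and x: "x \<in> Y" "x \<in> N" "x \<notin> M"
  shows "card (classes_mod G N Y) < card (classes_mod G M Y)"
proof -
  have sub: "subgroup M G" "subgroup N G" using M N normal_imp_subgroup by blast+
  have xc: "x \<in> carrier G" using x Y by blast
  have "M <#> conj_class G x \<noteq> M <#> conj_class G \<one>"
  proof
    assume "M <#> conj_class G x = M <#> conj_class G \<one>"
    then have "x \<in> M"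
      using normal_set_mult_conj_class[OF M subgroup.one_closed[OF sub(1)]]
        conj_class_self[OF xc] subgroup.one_closed[OF sub(1)] xc
      unfolding set_mult_def by force
    with x show False by blast
  qed
  moreover have "N <#> (M <#> conj_class G x) = N <#> (M <#> conj_class G \<one>)"
    using set_mult_subgroup_absorb[OF sub MN conj_class_carrier] xc
      normal_set_mult_conj_class[OF N] x(2) subgroup.one_closed[OF sub(2)] by simp
  ultimately have "\<not> inj_on (\<lambda>S. N <#> S) (classes_mod G M Y)"
    using x one unfolding inj_on_def classes_mod_def by blast
  then show ?thesis
    using classes_mod_image[OF sub MN Y(1)] card_image_le[of "classes_mod G M Y" "\<lambda>S. N <#> S"]
      inj_on_iff_eq_card[of "classes_mod G M Y"] Y(2)
    by (metis classes_mod_def finite_imageI le_neq_implies_less)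
qed

lemma classes_mod_one:
  assumes Y: "Y \<subseteq> carrier G"
    and invariant: "\<And>g x. g \<in> carrier G \<Longrightarrow> x \<in> Y \<Longrightarrow> conjugate G g x \<in> Y"
  shows "classes_mod G {\<one>} Y = {C \<in> conj_classes G. C \<subseteq> Y}"
proof -
  have "{\<one>} <#> conj_class G x = conj_class G x" if "x \<in> Y" for x
    using Y that conj_class_carrier[of x] lcos_mult_one l_coset_eq_set_mult by (metis subsetD)
  then have "classes_mod G {\<one>} Y = conj_class G ` Y"
    by (simp add: classes_mod_def)
  also have "\<dots> = {C \<in> conj_classes G. C \<subseteq> Y}"
    using Y invariant conj_class_self
    by (fastforce simp: conj_classes_def conj_class_conjugate)
  finally show ?thesis .
qed

end

section \<open>The derived series\<close>

context group begin

lemma exp_of_derived_subset: "subgroup H G \<Longrightarrow> (derived G ^^ n) H \<subseteq> H"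
proof (induction n)
  case (Suc n)
  then show ?case
    using derived_incl[OF subset_refl exp_of_derived_is_subgroup[OF Suc.prems, of n]] by auto
qed simp

lemma exp_of_derived_antimono:
  assumes "m \<le> n"
  shows "(derived G ^^ n) (carrier G) \<subseteq> (derived G ^^ m) (carrier G)"
proof -
  have "n = (n - m) + m" using assms by simp
  then have "(derived G ^^ n) (carrier G) = (derived G ^^ (n - m)) ((derived G ^^ m) (carrier G))"
    by (metis funpow_add comp_apply)
  also have "\<dots> \<subseteq> (derived G ^^ m) (carrier G)"
    by (rule exp_of_derived_subset[OF exp_of_derived_is_subgroup[OF subgroup_self]])
  finally show ?thesis .
qed

lemma derived_length_Mod_le:
  assumes C: "C \<lhd> G" and derived_C: "(derived G ^^ n) (carrier G) \<subseteq> C"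
  shows "derived_length (G Mod C) \<le> n"
proof -
  interpret C: normal C G by (rule C)
  interpret Q: group_hom G "G Mod C" "(#>) C" by (rule C.group_hom_rcos)
  have "(derived (G Mod C) ^^ n) (carrier (G Mod C)) = (#>) C ` (derived G ^^ n) (carrier G)"
    using Q.exp_of_derived_img[OF subset_refl, of n] unfolding carrier_FactGroup by simp
  also have "\<dots> = {\<one>\<^bsub>G Mod C\<^esub>}"
    using derived_C coset_join2 subgroup.mem_carrier[OF exp_of_derived_is_subgroup[OF subgroup_self]]
      subgroup.one_closed[OF exp_of_derived_is_subgroup[OF subgroup_self], of n] C.subgroup_axioms
    by (auto intro!: image_eqI[of _ _ \<one>])
  finally show ?thesis
    unfolding derived_length_def by (rule Least_le)
qed

end

section \<open>Normal subsets\<close>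

locale normal_subset = group G for G (structure) +
  fixes A
  assumes subset: "A \<subseteq> carrier G" and nonempty: "A \<noteq> {}"
    and conjugate_mem: "\<And>g x. g \<in> carrier G \<Longrightarrow> x \<in> A \<Longrightarrow> conjugate G g x \<in> A"

lemma (in group) normal_subset_conj_class:
  assumes "a \<in> carrier G"
  shows "normal_subset G (conj_class G a)"
proof (intro normal_subset.intro normal_subset_axioms.intro is_group)
  show "conj_class G a \<subseteq> carrier G" using conj_class_carrier[OF assms] .
  show "conj_class G a \<noteq> {}" using conj_class_self[OF assms] by blast
  fix g x assume g: "g \<in> carrier G" and "x \<in> conj_class G a"
  then obtain h where h: "h \<in> carrier G" and x: "x = conjugate G h a"
    by (auto simp: conj_class_conjugate)
  then have "conjugate G g x = conjugate G (h \<otimes> g) a"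
    using g assms by (simp add: conjugate_mult)
  then show "conjugate G g x \<in> conj_class G a"
    using g h by (auto simp: conj_class_conjugate)
qed

context normal_subset begin

lemma set_mult_inv_subset: "set_mult_inv G A \<subseteq> carrier G"
  using subset by (auto simp: set_mult_inv_def)

lemma one_mem_set_mult_inv: "\<one> \<in> set_mult_inv G A"
proof -
  obtain a where a: "a \<in> A" using nonempty by blast
  then have "\<one> = a \<otimes> inv a" using subset by auto
  with a show ?thesis unfolding set_mult_inv_def by blast
qed

lemma conjugate_mult_inv_mem:
  "g \<in> carrier G \<Longrightarrow> x \<in> A \<Longrightarrow> conjugate G g x \<otimes> inv x \<in> set_mult_inv G A"
  unfolding set_mult_inv_def using conjugate_mem by blast

lemma conjugate_mem_set_mult_inv:
  assumes g: "g \<in> carrier G" and y: "y \<in> set_mult_inv G A"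
  shows "conjugate G g y \<in> set_mult_inv G A"
proof -
  obtain a b where ab: "a \<in> A" "b \<in> A" and y_eq: "y = a \<otimes> inv b"
    using y unfolding set_mult_inv_def by blast
  have "a \<in> carrier G" "b \<in> carrier G" using ab subset by auto
  then have "conjugate G g y = conjugate G g a \<otimes> inv (conjugate G g b)"
    using g by (simp add: y_eq conjugate_hom_mult conjugate_inv)
  then show ?thesis
    unfolding set_mult_inv_def using conjugate_mem[OF g] ab by blast
qed

lemma normal_centralizer_set: "centralizer_set G A \<lhd> G"
  unfolding normal_inv_iff
proof (intro conjI ballI subgroup_centralizer_set[OF subset])
  fix g h assume g: "g \<in> carrier G" and h: "h \<in> centralizer_set G A"
  then have hc: "h \<in> carrier G" and h_fixes: "\<And>a. a \<in> A \<Longrightarrow> conjugate G h a = a"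
    by (auto simp: centralizer_set_conjugate)
  have "conjugate G (g \<otimes> h \<otimes> inv g) a = a" if a: "a \<in> A" for a
  proof -
    have "conjugate G (g \<otimes> h \<otimes> inv g) a = conjugate G (inv g) (conjugate G h (conjugate G g a))"
      using g hc a subset by (auto simp: conjugate_mult)
    also have "\<dots> = a"
      using h_fixes[OF conjugate_mem[OF g a]] conjugate_inv_cancel g a subset by auto
    finally show ?thesis .
  qed
  then show "g \<otimes> h \<otimes> inv g \<in> centralizer_set G A"
    using g hc by (simp add: centralizer_set_conjugate)
qed

lemma card_classes_mod_pos:
  "finite (carrier G) \<Longrightarrow> 0 < card (classes_mod G M (set_mult_inv G A))"
  using one_mem_set_mult_inv set_mult_inv_subset finite_subset
  by (auto simp: classes_mod_def card_gt_0_iff)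

lemma derived_subset_centralizer_mod_step:
  assumes finite: "finite (carrier G)" and M: "M \<lhd> G" and N: "N \<lhd> G" and MN: "M \<subseteq> N"
    and cyclic: "cyclic_mod G M N"
    and IH: "(derived G ^^ (2 * card (classes_mod G N (set_mult_inv G A)) - 1)) (carrier G)
               \<subseteq> centralizer_mod G N A"
  shows "(derived G ^^ (2 * card (classes_mod G M (set_mult_inv G A)) - 1)) (carrier G)
           \<subseteq> centralizer_mod G M A"
proof -
  let ?e = "\<lambda>M. card (classes_mod G M (set_mult_inv G A))"
  have finite_Y: "finite (set_mult_inv G A)"
    using set_mult_inv_subset finite finite_subset by blast
  have sub: "subgroup M G" "subgroup N G" using M N normal_imp_subgroup by blast+
  show ?thesis
  proof (cases "centralizer_mod G N A \<subseteq> centralizer_mod G M A")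
    case True
    have "?e N \<le> ?e M"
      by (rule card_classes_mod_mono[OF sub MN set_mult_inv_subset finite_Y])
    then have "(derived G ^^ (2 * ?e M - 1)) (carrier G) \<subseteq> (derived G ^^ (2 * ?e N - 1)) (carrier G)"
      by (intro exp_of_derived_antimono) simp
    with IH True show ?thesis by blast
  next
    case False
    then obtain g x where g: "g \<in> centralizer_mod G N A" and x: "x \<in> A"
      and not_M: "conjugate G g x \<otimes> inv x \<notin> M"
      by (auto simp: centralizer_mod_def)
    have "?e N < ?e M"
      using card_classes_mod_strict_mono[OF M N MN set_mult_inv_subset finite_Y
          one_mem_set_mult_inv conjugate_mult_inv_mem _ not_M] g x
      by (auto simp: centralizer_mod_def)
    then have "(derived G ^^ (2 * ?e M - 1)) (carrier G)
               \<subseteq> (derived G ^^ Suc (Suc (2 * ?e N - 1))) (carrier G)"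
      using card_classes_mod_pos[OF finite, of N] by (intro exp_of_derived_antimono) simp
    also have "\<dots> \<subseteq> derived G (derived G (centralizer_mod G N A))"
      using mono_derived[OF mono_derived[OF IH]] by simp
    also have "\<dots> \<subseteq> centralizer_mod G M A"
      by (rule derived_derived_centralizer_mod_subset[OF M N subset cyclic])
    finally show ?thesis .
  qed
qed

theorem derived_subset_centralizer_mod:
  assumes finite: "finite (carrier G)" and supersolvable: "supersolvable G" and M: "M \<lhd> G"
  shows "(derived G ^^ (2 * card (classes_mod G M (set_mult_inv G A)) - 1)) (carrier G)
           \<subseteq> centralizer_mod G M A"
  using M
proof (induction "card (carrier G) - card M" arbitrary: M rule: less_induct)
  case less
  show ?case
  proof (cases "M = carrier G")
    case True
    then show ?thesis
      using centralizer_mod_carrier[OF subset] exp_of_derived_in_carrier[OF subset_refl] by simp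
  next
    case False
    obtain N where N: "N \<lhd> G" and MN: "M \<subset> N" and cyclic: "cyclic_mod G M N"
      using supersolvable_cyclic_mod_step[OF supersolvable less.prems False] by blast
    have "card M < card N" "card N \<le> card (carrier G)"
      using psubset_card_mono[OF _ MN] card_mono[OF finite] finite_subset[OF _ finite]
        normal_imp_subgroup[OF N] subgroup.subset by blast+
    then show ?thesis
      using derived_subset_centralizer_mod_step[OF finite less.prems N _ cyclic less.hyps[OF _ N]] MN
      by auto
  qed
qed

theorem derived_length_Mod_centralizer_le:
  assumes "finite (carrier G)" and "supersolvable G"
  shows "int (derived_length (G Mod centralizer_set G A))
           \<le> 2 * int (num_classes G (set_mult_inv G A)) - 1"
proof -
  let ?Y = "set_mult_inv G A"
  have classes: "classes_mod G {\<one>} ?Y = {C \<in> conj_classes G. C \<subseteq> ?Y}"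
    using classes_mod_one[OF set_mult_inv_subset conjugate_mem_set_mult_inv] .
  then have num_classes: "num_classes G ?Y = card (classes_mod G {\<one>} ?Y)"
    by (simp add: num_classes_def)
  have "derived_length (G Mod centralizer_set G A) \<le> 2 * num_classes G ?Y - 1"
    using derived_length_Mod_le[OF normal_centralizer_set]
      derived_subset_centralizer_mod[OF assms one_is_normal]
    by (simp add: centralizer_mod_one[OF subset] num_classes)
  moreover have "num_classes G ?Y \<noteq> 0"
    using card_classes_mod_pos[OF assms(1)] by (simp add: num_classes)
  ultimately show ?thesis by linarith
qed

end

theorem theoremB:
  fixes G :: "('a, 'b) monoid_scheme" and A :: "'a set"
  assumes "group G" and "finite (carrier G)" and "supersolvable G"
    and "A \<in> conj_classes G"
  shows "int (derived_length (G Mod (centralizer_set G A)))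
           \<le> 2 * int (num_classes G (set_mult_inv G A)) - 1"
proof -
  interpret group G by (rule assms(1))
  obtain a where "a \<in> carrier G" and "A = conj_class G a"
    using assms(4) unfolding conj_classes_def by blast
  then interpret normal_subset G A
    using normal_subset_conj_class by simp
  show ?thesis
    using derived_length_Mod_centralizer_le[OF assms(2,3)] .
qed

end
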